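(* Assume the context distribution is stationary, i.e. $p(x,t)=p(x)p(t)$ on $\mathcal{X}\times[0,T]$ and $p(x\mid t')=p(x)$. Suppose the logging policy has full support, $\pi_0(a\mid x,t)>0$ for all $x\in\mathcal{X}$, $t\in[0,T]$, $a\in\mathcal{A}$, and that $p(\phi(t'))>0$. Then $$\mathrm{Bias}\big(\nabla_\zeta\hat V^{\mathrm{OPFV}}_{t'}(\pi_\zeta;\mathcal{D})\big)=\mathbb{E}_{p(x,t)\pi_\zeta(a\mid x,t')}\!\left[\frac{\mathbb{I}_\phi(t,t')}{p(\phi(t'))}\big(\Delta_q(x,t,t',a)-\Delta_{\hat f}(x,t,t',a)\big)s_\zeta(x,t',a)\right].$$
   Context: Contexts $x\in\mathcal{X}$, finite action set $\mathcal{A}$, continuous time $t$, rewards $r\in[0,r_{\max}]$. Logged data $\mathcal{D}=\{(x_i,t_i,a_i,r_i)\}_{i=1}^n$: $n$ i.i.d. draws $(x,t)\sim p(x,t)$ supported on $\mathcal{X}\times[0,T]$, $a\sim\pi_0(a\mid x,t)$, $r\sim p(r\mid x,t,a)$; reward distributions defined for all $t\ge0$; $q(x,t,a)=\mathbb{E}[r\mid x,t,a]$. Target time $t'>T$. $\pi_\zeta(a\mid x,t)$ is a policy differentiable in a parameter vector $\zeta$, with score $s_\zeta(x,t,a)=\nabla_\zeta\log\pi_\zeta(a\mid x,t)$; the true gradient is $\nabla_\zeta V_{t'}(\pi_\zeta)=\mathbb{E}_{p(x\mid t')\pi_\zeta(a\mid x,t')}[q(x,t',a)s_\zeta(x,t',a)]$.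 A time feature function $\phi$ maps times to labels; $\mathbb{I}_\phi(t,t')=\mathbb{I}\{\phi(t)=\phi(t')\}$, $p(\phi(t'))=\int_0^Tp(s)\mathbb{I}_\phi(s,t')ds$. $\hat f$ is a fixed regressor on $\mathcal{X}\times[0,\infty)\times\mathcal{A}$. The OPFV gradient estimator is $$\nabla_\zeta\hat V^{\mathrm{OPFV}}_{t'}(\pi_\zeta;\mathcal{D})=\frac1n\sum_{i=1}^n\left\{\frac{\mathbb{I}_\phi(t_i,t')}{p(\phi(t'))}\frac{\pi_\zeta(a_i\mid x_i,t')}{\pi_0(a_i\mid x_i,t_i)}\big(r_i-\hat f(x_i,t_i,a_i)\big)s_\zeta(x_i,t',a_i)+\mathbb{E}_{\pi_\zeta(a\mid x_i,t')}\big[\hat f(x_i,t',a)s_\zeta(x_i,t',a)\big]\right\},$$ and its bias is $\mathbb{E}_{\mathcal{D}}[\nabla_\zeta\hat V^{\mathrm{OPFV}}_{t'}(\pi_\zeta;\mathcal{D})]-\nabla_\zeta V_{t'}(\pi_\zeta)$. $\Delta_q(x,t,t',a)=q(x,t,a)-q(x,t',a)$, $\Delta_{\hat f}(x,t,t',a)=\hat f(x,t,a)-\hat f(x,t',a)$. *)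

theory Defs
  imports "HOL-Probability.Probability"
begin

text \<open>Setting. Contexts of type 'x with context distribution Mx; times are reals;
  actions form a finite type 'a; rewards are reals. A logged sample is (x,t,a,r).\<close>

type_synonym ('x,'a) sample = "'x \<times> real \<times> 'a \<times> real"

definition sample_space :: "'x measure \<Rightarrow> ('x, 'a) sample measure" where
  "sample_space Mx = Mx \<Otimes>\<^sub>M (borel \<Otimes>\<^sub>M (count_space UNIV \<Otimes>\<^sub>M borel))"

definition action_meas :: "('a::finite \<Rightarrow> real) \<Rightarrow> 'a measure" where
  "action_meas w = point_measure UNIV (\<lambda>a. ennreal (w a))"

definition sample_measure ::
  "'x measure \<Rightarrow> ('x \<times> real) measure \<Rightarrow> ('x \<Rightarrow> real \<Rightarrow> 'a::finite \<Rightarrow> real)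
   \<Rightarrow> ('x \<Rightarrow> real \<Rightarrow> 'a \<Rightarrow> real measure) \<Rightarrow> ('x, 'a) sample measure" where
  "sample_measure Mx Pxt pi0 R =
     Pxt \<bind> (\<lambda>xt. action_meas (pi0 (fst xt) (snd xt)) \<bind>
       (\<lambda>a. R (fst xt) (snd xt) a \<bind>
         (\<lambda>r. return (sample_space Mx) (fst xt, snd xt, a, r))))"

definition data_measure ::
  "nat \<Rightarrow> 'x measure \<Rightarrow> ('x \<times> real) measure \<Rightarrow> ('x \<Rightarrow> real \<Rightarrow> 'a::finite \<Rightarrow> real)
   \<Rightarrow> ('x \<Rightarrow> real \<Rightarrow> 'a \<Rightarrow> real measure) \<Rightarrow> (nat \<Rightarrow> ('x, 'a) sample) measure" where
  "data_measure n Mx Pxt pi0 R = PiM {..<n} (\<lambda>_. sample_measure Mx Pxt pi0 R)"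

definition qfun :: "('x \<Rightarrow> real \<Rightarrow> 'a \<Rightarrow> real measure) \<Rightarrow> 'x \<Rightarrow> real \<Rightarrow> 'a \<Rightarrow> real" where
  "qfun R x t a = (\<integral>r. r \<partial>(R x t a))"

definition Iphi :: "(real \<Rightarrow> 'l) \<Rightarrow> real \<Rightarrow> real \<Rightarrow> real" where
  "Iphi phi t t' = (if phi t = phi t' then 1 else 0)"

definition pphi :: "(real \<Rightarrow> real) \<Rightarrow> real \<Rightarrow> (real \<Rightarrow> 'l) \<Rightarrow> real \<Rightarrow> real" where
  "pphi pt T phi t' = (LINT s:{0..T}|lborel. pt s * Iphi phi s t')"

definition opfv_grad ::
  "nat \<Rightarrow> (real \<Rightarrow> real) \<Rightarrow> real \<Rightarrow> (real \<Rightarrow> 'l) \<Rightarrow> real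
   \<Rightarrow> ('x \<Rightarrow> real \<Rightarrow> 'a::finite \<Rightarrow> real) \<Rightarrow> ('x \<Rightarrow> real \<Rightarrow> 'a \<Rightarrow> real)
   \<Rightarrow> ('x \<Rightarrow> real \<Rightarrow> 'a \<Rightarrow> real) \<Rightarrow> ('x \<Rightarrow> real \<Rightarrow> 'a \<Rightarrow> 'z::real_normed_vector)
   \<Rightarrow> (nat \<Rightarrow> ('x, 'a) sample) \<Rightarrow> 'z" where
  "opfv_grad n pt T phi t' pz pi0 fhat s D =
     (1 / real n) *\<^sub>R (\<Sum>i<n. case D i of (x, t, a, r) \<Rightarrow>
        (Iphi phi t t' / pphi pt T phi t' * (pz x t' a / pi0 x t a) * (r - fhat x t a))
          *\<^sub>R s x t' a
        + (\<Sum>b\<in>UNIV. (pz x t' b * fhat x t' b) *\<^sub>R s x t' b))"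

definition true_grad ::
  "'x measure \<Rightarrow> real \<Rightarrow> ('x \<Rightarrow> real \<Rightarrow> 'a::finite \<Rightarrow> real)
   \<Rightarrow> ('x \<Rightarrow> real \<Rightarrow> 'a \<Rightarrow> real measure) \<Rightarrow> ('x \<Rightarrow> real \<Rightarrow> 'a \<Rightarrow> 'z::{banach, second_countable_topology})
   \<Rightarrow> 'z" where
  "true_grad Px' t' pz R s = (\<integral>x. (\<Sum>a\<in>UNIV. (pz x t' a * qfun R x t' a) *\<^sub>R s x t' a) \<partial>Px')"

end

(* Let h be one summand of the OPFV estimator, so that the estimator averages h over n i.i.d.
   samples and has expectation E[h].  Given (x, t) with t in [0, T], averaging over the reward
   turns r into q(x,t,a), and full support of pi0 cancels the logging probability against the
   importance weight.  With w(t) = I_phi(t,t') / p(phi(t')) and E_a the expectation over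
   a ~ pi_zeta(.|x,t'), this gives
     E[h | x, t] = E_a[w(t) (q(x,t,a) - fhat(x,t,a)) s] + E_a[fhat(x,t',a) s],
   while the true gradient is the x-average of
     E_a[(q(x,t',a) - fhat(x,t',a)) s] + E_a[fhat(x,t',a) s].
   The direct-method terms agree.  Under p(x,t) = p(x) p(t) the weight w(t) has mean 1 and is
   independent of x, so the first term of the true gradient equals its integral against w(t)
   over p(x,t); subtracting gives the bias formula.  Bounded rewards and the bound w <= 1/p(phi(t'))
   make every integral finite. *)

theory Submission
  imports Defs
begin

section \<open>Integrals over kernels and products\<close>

(* The library's integral_bind needs a bounded integrand; here it suffices that the iterated
   integral of the norm is finite. *)
lemma integrable_bind_kernel:
  fixes f :: "'b \<Rightarrow> 'c::{banach, second_countable_topology}"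
  assumes N: "N \<in> measurable M (subprob_algebra B)"
    and f[measurable]: "f \<in> borel_measurable B"
    and fin: "(\<integral>\<^sup>+x. \<integral>\<^sup>+y. norm (f y) \<partial>N x \<partial>M) < \<infinity>"
  shows "integrable (M \<bind> N) f"
proof (cases "space M = {}")
  case True
  then show ?thesis by (simp add: bind_empty integrable_count_space)
next
  case False
  have sets: "sets (M \<bind> N) = sets B"
    using sets_bind[OF sets_kernel[OF N] False] .
  have "(\<integral>\<^sup>+y. norm (f y) \<partial>(M \<bind> N)) = (\<integral>\<^sup>+x. \<integral>\<^sup>+y. norm (f y) \<partial>N x \<partial>M)"
    by (rule nn_integral_bind[OF _ N]) measurable
  then show ?thesis
    using fin by (simp add: integrable_iff_bounded measurable_cong_sets[OF sets refl])
qed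

lemma integral_bind_kernel_nonneg:
  fixes f :: "'b \<Rightarrow> real"
  assumes N: "N \<in> measurable M (subprob_algebra B)"
    and f[measurable]: "f \<in> borel_measurable B"
    and nonneg: "\<And>y. 0 \<le> f y"
    and fin: "(\<integral>\<^sup>+x. \<integral>\<^sup>+y. f y \<partial>N x \<partial>M) < \<infinity>"
  shows "AE x in M. integrable (N x) f"
    and "integrable M (\<lambda>x. \<integral>y. f y \<partial>N x)"
    and "(\<integral>y. f y \<partial>(M \<bind> N)) = (\<integral>x. (\<integral>y. f y \<partial>N x) \<partial>M)"
proof -
  have [measurable]: "(\<lambda>x. \<integral>\<^sup>+y. f y \<partial>N x) \<in> borel_measurable M"
    using measurable_compose[OF N nn_integral_measurable_subprob_algebra] by measurable
  have fin_AE: "AE x in M. (\<integral>\<^sup>+y. f y \<partial>N x) \<noteq> \<infinity>"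
    using fin by (intro nn_integral_PInf_AE) auto
  have inner: "integrable (N x) f \<and> (\<integral>\<^sup>+y. f y \<partial>N x) = ennreal (\<integral>y. f y \<partial>N x)"
    if x: "x \<in> space M" and fin_x: "(\<integral>\<^sup>+y. f y \<partial>N x) \<noteq> \<infinity>" for x
  proof -
    have "f \<in> borel_measurable (N x)"
      using f by (simp add: measurable_cong_sets[OF sets_kernel[OF N x] refl])
    then have "integrable (N x) f"
      using fin_x nonneg by (simp add: integrable_iff_bounded less_top)
    then show ?thesis using nonneg by (simp add: nn_integral_eq_integral)
  qed
  show "AE x in M. integrable (N x) f"
    by (rule AE_mp[OF fin_AE AE_I2]) (simp add: inner)
  have outer: "(\<integral>\<^sup>+x. \<integral>\<^sup>+y. f y \<partial>N x \<partial>M) = (\<integral>\<^sup>+x. ennreal (\<integral>y. f y \<partial>N x) \<partial>M)"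
    by (rule nn_integral_cong_AE, rule AE_mp[OF fin_AE AE_I2]) (simp add: inner)
  show int_outer: "integrable M (\<lambda>x. \<integral>y. f y \<partial>N x)"
    using fin nonneg measurable_compose[OF N integral_measurable_subprob_algebra[OF f]]
    unfolding outer by (simp add: integrable_iff_bounded integral_nonneg)
  have int_bind: "integrable (M \<bind> N) f"
    by (rule integrable_bind_kernel[OF N f]) (use fin nonneg in simp)
  have "ennreal (\<integral>y. f y \<partial>(M \<bind> N)) = (\<integral>\<^sup>+y. f y \<partial>(M \<bind> N))"
    using int_bind nonneg by (simp add: nn_integral_eq_integral)
  also have "\<dots> = (\<integral>\<^sup>+x. \<integral>\<^sup>+y. f y \<partial>N x \<partial>M)"
    by (rule nn_integral_bind[OF _ N]) measurable
  also have "\<dots> = ennreal (\<integral>x. (\<integral>y. f y \<partial>N x) \<partial>M)"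
    using int_outer nonneg by (simp add: outer nn_integral_eq_integral integral_nonneg)
  finally show "(\<integral>y. f y \<partial>(M \<bind> N)) = (\<integral>x. (\<integral>y. f y \<partial>N x) \<partial>M)"
    using nonneg by (simp add: integral_nonneg integral_nonneg_AE)
qed

lemma integral_bind_kernel_real:
  fixes f :: "'b \<Rightarrow> real"
  assumes N: "N \<in> measurable M (subprob_algebra B)"
    and f[measurable]: "f \<in> borel_measurable B"
    and fin: "(\<integral>\<^sup>+x. \<integral>\<^sup>+y. norm (f y) \<partial>N x \<partial>M) < \<infinity>"
  shows "(\<integral>y. f y \<partial>(M \<bind> N)) = (\<integral>x. (\<integral>y. f y \<partial>N x) \<partial>M)"
proof -
  define P where "P y = max (f y) 0" for y
  define Q where "Q y = max (- f y) 0" for y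
  have P_meas[measurable]: "P \<in> borel_measurable B" and Q_meas[measurable]: "Q \<in> borel_measurable B"
    unfolding P_def Q_def by measurable
  have fin_P: "(\<integral>\<^sup>+x. \<integral>\<^sup>+y. P y \<partial>N x \<partial>M) < \<infinity>"
    by (rule le_less_trans[OF _ fin], intro nn_integral_mono) (auto simp: P_def)
  have fin_Q: "(\<integral>\<^sup>+x. \<integral>\<^sup>+y. Q y \<partial>N x \<partial>M) < \<infinity>"
    by (rule le_less_trans[OF _ fin], intro nn_integral_mono) (auto simp: Q_def)
  have P_nonneg: "0 \<le> P y" and Q_nonneg: "0 \<le> Q y" for y
    by (auto simp: P_def Q_def)
  note P = integral_bind_kernel_nonneg[OF N P_meas P_nonneg fin_P]
  note Q = integral_bind_kernel_nonneg[OF N Q_meas Q_nonneg fin_Q]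
  have int_P: "integrable (M \<bind> N) P"
    by (rule integrable_bind_kernel[OF N P_meas]) (use fin_P P_nonneg in simp)
  have int_Q: "integrable (M \<bind> N) Q"
    by (rule integrable_bind_kernel[OF N Q_meas]) (use fin_Q Q_nonneg in simp)
  have f_eq: "f y = P y - Q y" for y by (auto simp: P_def Q_def)
  have "(\<integral>y. f y \<partial>(M \<bind> N)) = (\<integral>y. P y \<partial>(M \<bind> N)) - (\<integral>y. Q y \<partial>(M \<bind> N))"
    using int_P int_Q by (simp add: f_eq)
  also have "\<dots> = (\<integral>x. (\<integral>y. P y \<partial>N x) - (\<integral>y. Q y \<partial>N x) \<partial>M)"
    using P(2,3) Q(2,3) by simp
  also have "\<dots> = (\<integral>x. (\<integral>y. f y \<partial>N x) \<partial>M)"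
  proof (rule integral_cong_AE)
    show "(\<lambda>x. (\<integral>y. P y \<partial>N x) - (\<integral>y. Q y \<partial>N x)) \<in> borel_measurable M"
      using measurable_compose[OF N integral_measurable_subprob_algebra[OF P_meas]]
            measurable_compose[OF N integral_measurable_subprob_algebra[OF Q_meas]]
      by measurable
    show "(\<lambda>x. (\<integral>y. f y \<partial>N x)) \<in> borel_measurable M"
      using measurable_compose[OF N integral_measurable_subprob_algebra[OF f]] .
    show "AE x in M. (\<integral>y. P y \<partial>N x) - (\<integral>y. Q y \<partial>N x) = (\<integral>y. f y \<partial>N x)"
      using P(1) Q(1) by eventually_elim (simp add: f_eq)
  qed
  finally show ?thesis .
qed

lemma integral_bind_kernel:
  fixes f :: "'b \<Rightarrow> 'z::euclidean_space"
  assumes N: "N \<in> measurable M (subprob_algebra B)"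
    and f[measurable]: "f \<in> borel_measurable B"
    and fin: "(\<integral>\<^sup>+x. \<integral>\<^sup>+y. norm (f y) \<partial>N x \<partial>M) < \<infinity>"
  shows "(\<integral>y. f y \<partial>(M \<bind> N)) = (\<integral>x. (\<integral>y. f y \<partial>N x) \<partial>M)"
proof -
  have norm_meas: "(\<lambda>y. norm (f y)) \<in> borel_measurable B" by measurable
  note norm_f = integral_bind_kernel_nonneg[OF N norm_meas norm_ge_zero fin]
  have inner_meas: "(\<lambda>x. \<integral>y. f y \<partial>N x) \<in> borel_measurable M"
    using measurable_compose[OF N integral_measurable_subprob_algebra[OF f]] .
  have AE_int: "AE x in M. integrable (N x) f"
  proof (rule AE_mp[OF norm_f(1) AE_I2], intro impI)
    fix x assume "x \<in> space M" "integrable (N x) (\<lambda>y. norm (f y))"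
    then show "integrable (N x) f"
      using f by (simp add: integrable_norm_iff measurable_cong_sets[OF sets_kernel[OF N] refl])
  qed
  have int_outer: "integrable M (\<lambda>x. \<integral>y. f y \<partial>N x)"
    by (rule Bochner_Integration.integrable_bound[OF norm_f(2) inner_meas])
       (auto intro: integral_norm_bound)
  show ?thesis
  proof (rule euclidean_eqI)
    fix b :: 'z assume b: "b \<in> Basis"
    have fin_b: "(\<integral>\<^sup>+x. \<integral>\<^sup>+y. norm (f y \<bullet> b) \<partial>N x \<partial>M) < \<infinity>"
      by (rule le_less_trans[OF _ fin], intro nn_integral_mono)
         (use b in \<open>auto simp: Basis_le_norm\<close>)
    have "(\<integral>y. f y \<partial>(M \<bind> N)) \<bullet> b = (\<integral>y. f y \<bullet> b \<partial>(M \<bind> N))"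
      using integrable_bind_kernel[OF N f fin] by simp
    also have "\<dots> = (\<integral>x. (\<integral>y. f y \<bullet> b \<partial>N x) \<partial>M)"
      by (rule integral_bind_kernel_real[OF N _ fin_b]) measurable
    also have "\<dots> = (\<integral>x. (\<integral>y. f y \<partial>N x) \<bullet> b \<partial>M)"
    proof (rule integral_cong_AE)
      show "(\<lambda>x. \<integral>y. f y \<bullet> b \<partial>N x) \<in> borel_measurable M"
        using measurable_compose[OF N integral_measurable_subprob_algebra[of "\<lambda>y. f y \<bullet> b" B]]
        by measurable
      show "(\<lambda>x. (\<integral>y. f y \<partial>N x) \<bullet> b) \<in> borel_measurable M"
        using inner_meas by measurable
      show "AE x in M. (\<integral>y. f y \<bullet> b \<partial>N x) = (\<integral>y. f y \<partial>N x) \<bullet> b"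
        using AE_int by eventually_elim simp
    qed
    also have "\<dots> = (\<integral>x. (\<integral>y. f y \<partial>N x) \<partial>M) \<bullet> b"
      using int_outer by simp
    finally show "(\<integral>y. f y \<partial>(M \<bind> N)) \<bullet> b = (\<integral>x. (\<integral>y. f y \<partial>N x) \<partial>M) \<bullet> b" .
  qed
qed

lemma (in pair_sigma_finite) integral_scaleR_product:
  fixes g :: "'a \<Rightarrow> 'z::{banach, second_countable_topology}" and w :: "'b \<Rightarrow> real"
  assumes g: "integrable M1 g" and w: "integrable M2 w"
  shows "integrable (M1 \<Otimes>\<^sub>M M2) (\<lambda>(x, y). w y *\<^sub>R g x)"
    and "(\<integral>(x, y). w y *\<^sub>R g x \<partial>(M1 \<Otimes>\<^sub>M M2)) = (\<integral>y. w y \<partial>M2) *\<^sub>R (\<integral>x. g x \<partial>M1)"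
proof -
  have [measurable]: "g \<in> borel_measurable M1" "w \<in> borel_measurable M2"
    using g w by auto
  show int: "integrable (M1 \<Otimes>\<^sub>M M2) (\<lambda>(x, y). w y *\<^sub>R g x)"
  proof (rule Fubini_integrable)
    show "integrable M1 (\<lambda>x. \<integral>y. norm (case (x, y) of (x, y) \<Rightarrow> w y *\<^sub>R g x) \<partial>M2)"
      using g by (simp add: mult.commute)
  qed (use w in auto)
  have "(\<integral>(x, y). w y *\<^sub>R g x \<partial>(M1 \<Otimes>\<^sub>M M2)) = (\<integral>x. (\<integral>y. w y *\<^sub>R g x \<partial>M2) \<partial>M1)"
    using integral_fst'[OF int] by simp
  also have "\<dots> = (\<integral>y. w y \<partial>M2) *\<^sub>R (\<integral>x. g x \<partial>M1)"
    using w by simp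
  finally show "(\<integral>(x, y). w y *\<^sub>R g x \<partial>(M1 \<Otimes>\<^sub>M M2)) = (\<integral>y. w y \<partial>M2) *\<^sub>R (\<integral>x. g x \<partial>M1)" .
qed

lemma integral_PiM_average:
  fixes f :: "'a \<Rightarrow> 'b::{banach, second_countable_topology}"
  assumes M: "prob_space M" and f: "integrable M f" and n: "0 < n"
  shows "(\<integral>\<omega>. (1 / real n) *\<^sub>R (\<Sum>i<n. f (\<omega> i)) \<partial>Pi\<^sub>M {..<n} (\<lambda>_. M)) = integral\<^sup>L M f"
proof -
  have f_meas: "f \<in> borel_measurable M" using f by auto
  have distr_i: "distr (Pi\<^sub>M {..<n} (\<lambda>_. M)) M (\<lambda>\<omega>. \<omega> i) = M" if "i < n" for i
    by (rule distr_PiM_component) (use M that in auto)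
  have meas_i: "(\<lambda>\<omega>. \<omega> i) \<in> measurable (Pi\<^sub>M {..<n} (\<lambda>_. M)) M" if "i < n" for i
    by (rule measurable_component_singleton) (use that in auto)
  have int_i: "integrable (Pi\<^sub>M {..<n} (\<lambda>_. M)) (\<lambda>\<omega>. f (\<omega> i))" if "i < n" for i
    using integrable_distr_eq[OF meas_i[OF that] f_meas] f distr_i[OF that] by simp
  have integral_i: "(\<integral>\<omega>. f (\<omega> i) \<partial>Pi\<^sub>M {..<n} (\<lambda>_. M)) = integral\<^sup>L M f" if "i < n" for i
    using integral_distr[OF meas_i[OF that] f_meas] distr_i[OF that] by simp
  show ?thesis
    using n by (simp add: int_i integral_i Bochner_Integration.integral_sum sum_constant_scaleR)
qed

section \<open>Action distributions and the sampling kernel\<close>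

lemma sets_action_meas [simp]: "sets (action_meas w) = sets (count_space UNIV)"
  by (simp add: action_meas_def sets_point_measure_count_space)

lemma space_action_meas [simp]: "space (action_meas w) = UNIV"
  using sets_eq_imp_space_eq[OF sets_action_meas[of w]] by simp

lemma nn_integral_action_meas:
  assumes "\<And>a. 0 \<le> w a"
  shows "(\<integral>\<^sup>+a. f a \<partial>action_meas w) = (\<Sum>a\<in>UNIV. ennreal (w a) * f a)"
  unfolding action_meas_def using assms by (simp add: nn_integral_point_measure_finite)

lemma integral_action_meas:
  fixes f :: "'a::finite \<Rightarrow> 'b::{banach, second_countable_topology}"
  assumes "\<And>a. 0 \<le> w a"
  shows "(\<integral>a. f a \<partial>action_meas w) = (\<Sum>a\<in>UNIV. w a *\<^sub>R f a)"
  unfolding action_meas_def point_measure_def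
  using assms by (subst integral_density) (auto simp: lebesgue_integral_count_space_finite)

lemma prob_space_action_meas:
  assumes "\<And>a. 0 \<le> w a" and "(\<Sum>a\<in>UNIV. w a) = 1"
  shows "prob_space (action_meas (w :: 'a::finite \<Rightarrow> real))"
proof
  have "emeasure (action_meas w) (space (action_meas w)) = (\<Sum>a\<in>UNIV. ennreal (w a))"
    using space_action_meas[of w] unfolding action_meas_def
    by (simp add: emeasure_point_measure_finite)
  then show "emeasure (action_meas w) (space (action_meas w)) = 1"
    using assms by (simp add: sum_ennreal)
qed

lemma measurable_action_meas:
  fixes w :: "'b \<Rightarrow> 'a::finite \<Rightarrow> real"
  assumes w_meas: "\<And>a. (\<lambda>x. w x a) \<in> borel_measurable M"
    and w_nonneg: "\<And>x a. 0 \<le> w x a" and w_sum: "\<And>x. (\<Sum>a\<in>UNIV. w x a) = 1"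
  shows "(\<lambda>x. action_meas (w x)) \<in> M \<rightarrow>\<^sub>M prob_algebra (count_space UNIV)"
proof (rule measurable_prob_algebraI)
  show "prob_space (action_meas (w x))" for x
    using w_nonneg w_sum by (rule prob_space_action_meas)
  show "(\<lambda>x. action_meas (w x)) \<in> M \<rightarrow>\<^sub>M subprob_algebra (count_space UNIV)"
  proof (rule measurable_subprob_algebra)
    show "subprob_space (action_meas (w x))" for x
      using w_nonneg w_sum by (intro prob_space_imp_subprob_space prob_space_action_meas)
    fix A :: "'a set"
    have "(\<lambda>x. \<Sum>a\<in>A. ennreal (w x a)) \<in> borel_measurable M"
      using w_meas by measurable
    then show "(\<lambda>x. emeasure (action_meas (w x)) A) \<in> borel_measurable M"
      by (simp add: action_meas_def emeasure_point_measure_finite)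
  qed simp
qed

definition sample_kernel ::
  "'x measure \<Rightarrow> ('x \<Rightarrow> real \<Rightarrow> 'a::finite \<Rightarrow> real) \<Rightarrow> ('x \<Rightarrow> real \<Rightarrow> 'a \<Rightarrow> real measure)
   \<Rightarrow> 'x \<times> real \<Rightarrow> ('x, 'a) sample measure" where
  "sample_kernel Mx pi0 R = (\<lambda>(x, t). action_meas (pi0 x t) \<bind>
     (\<lambda>a. R x t a \<bind> (\<lambda>r. return (sample_space Mx) (x, t, a, r))))"

lemma sample_measure_eq_bind: "sample_measure Mx Pxt pi0 R = Pxt \<bind> sample_kernel Mx pi0 R"
  by (simp add: sample_measure_def sample_kernel_def case_prod_beta')

locale logging_policy =
  fixes Mx :: "'x measure"
    and pi0 :: "'x \<Rightarrow> real \<Rightarrow> 'a::finite \<Rightarrow> real"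
    and R :: "'x \<Rightarrow> real \<Rightarrow> 'a \<Rightarrow> real measure"
  assumes pi0_nonneg: "\<And>x t a. 0 \<le> pi0 x t a"
    and pi0_sum: "\<And>x t. (\<Sum>a\<in>UNIV. pi0 x t a) = 1"
    and pi0_meas: "\<And>a. (\<lambda>(x, t). pi0 x t a) \<in> borel_measurable (Mx \<Otimes>\<^sub>M borel)"
    and R_meas: "(\<lambda>(x, t, a). R x t a)
                   \<in> measurable (Mx \<Otimes>\<^sub>M (borel \<Otimes>\<^sub>M count_space UNIV)) (prob_algebra borel)"
begin

lemma
  assumes "x \<in> space Mx"
  shows prob_space_R: "prob_space (R x t a)"
    and sets_R: "sets (R x t a) = sets borel"
  using measurable_space[OF R_meas, of "(x, t, a)"] assms
  by (simp_all add: space_pair_measure space_prob_algebra)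

lemma measurable_embed_reward:
  "x \<in> space Mx \<Longrightarrow> (\<lambda>r. (x, t, a, r)) \<in> measurable (R x t a) (sample_space Mx)"
  unfolding measurable_cong_sets[OF sets_R refl] sample_space_def by measurable

lemma sample_kernel_eq_distr:
  assumes x: "x \<in> space Mx"
  shows "sample_kernel Mx pi0 R (x, t)
           = action_meas (pi0 x t) \<bind> (\<lambda>a. distr (R x t a) (sample_space Mx) (\<lambda>r. (x, t, a, r)))"
  unfolding sample_kernel_def
  using bind_return_distr'[OF prob_space.not_empty[OF prob_space_R[OF x]] measurable_embed_reward[OF x]]
  by simp

lemma measurable_reward_kernel:
  assumes x: "x \<in> space Mx"
  shows "(\<lambda>a. distr (R x t a) (sample_space Mx) (\<lambda>r. (x, t, a, r)))
           \<in> measurable (action_meas (pi0 x t)) (subprob_algebra (sample_space Mx))"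
  unfolding measurable_cong_sets[OF sets_action_meas refl] measurable_count_space_eq1
  using x by (auto simp: space_subprob_algebra measurable_embed_reward
      intro!: prob_space_imp_subprob_space prob_space.prob_space_distr prob_space_R)

lemma measurable_sample_kernel:
  "sample_kernel Mx pi0 R \<in> Mx \<Otimes>\<^sub>M borel \<rightarrow>\<^sub>M prob_algebra (sample_space Mx)"
proof -
  let ?XT = "Mx \<Otimes>\<^sub>M borel :: ('x \<times> real) measure"
  let ?A = "count_space UNIV :: 'a measure"
  have actions: "(\<lambda>xt. action_meas (pi0 (fst xt) (snd xt))) \<in> ?XT \<rightarrow>\<^sub>M prob_algebra ?A"
    using pi0_meas by (intro measurable_action_meas) (simp_all add: case_prod_beta' pi0_nonneg pi0_sum)
  have rewards: "(\<lambda>y. R (fst (fst y)) (snd (fst y)) (snd y))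
      \<in> ?XT \<Otimes>\<^sub>M ?A \<rightarrow>\<^sub>M prob_algebra borel"
  proof -
    have "(\<lambda>y. (fst (fst y), snd (fst y), snd y))
        \<in> ?XT \<Otimes>\<^sub>M ?A \<rightarrow>\<^sub>M Mx \<Otimes>\<^sub>M (borel \<Otimes>\<^sub>M count_space UNIV)"
      by measurable
    from measurable_compose[OF this R_meas] show ?thesis by (simp add: comp_def)
  qed
  have returns: "(\<lambda>(y, r). return (sample_space Mx) (fst (fst y), snd (fst y), snd y, r))
      \<in> (?XT \<Otimes>\<^sub>M ?A) \<Otimes>\<^sub>M borel \<rightarrow>\<^sub>M prob_algebra (sample_space Mx)"
  proof -
    have "(\<lambda>(y, r). (fst (fst y), snd (fst y), snd y, r))
        \<in> (?XT \<Otimes>\<^sub>M ?A) \<Otimes>\<^sub>M borel \<rightarrow>\<^sub>M sample_space Mx"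
      unfolding sample_space_def by measurable
    from measurable_compose[OF this measurable_return_prob_space] show ?thesis
      by (simp add: comp_def case_prod_beta')
  qed
  have "(\<lambda>xt. action_meas (pi0 (fst xt) (snd xt)) \<bind> (\<lambda>a. R (fst xt) (snd xt) a \<bind>
           (\<lambda>r. return (sample_space Mx) (fst xt, snd xt, a, r))))
        \<in> ?XT \<rightarrow>\<^sub>M prob_algebra (sample_space Mx)"
    by (rule measurable_bind_prob_space2[OF actions])
       (use measurable_bind_prob_space2[OF rewards returns] in \<open>simp add: case_prod_beta'\<close>)
  then show ?thesis by (simp add: sample_kernel_def case_prod_beta')
qed

lemma nn_integral_sample_kernel:
  assumes x: "x \<in> space Mx" and f[measurable]: "f \<in> borel_measurable (sample_space Mx)"
  shows "(\<integral>\<^sup>+y. f y \<partial>sample_kernel Mx pi0 R (x, t))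
           = (\<Sum>a\<in>UNIV. ennreal (pi0 x t a) * (\<integral>\<^sup>+r. f (x, t, a, r) \<partial>R x t a))"
  by (simp add: sample_kernel_eq_distr[OF x] nn_integral_bind[OF f measurable_reward_kernel[OF x]]
      nn_integral_action_meas pi0_nonneg nn_integral_distr[OF measurable_embed_reward[OF x]])

lemma integral_sample_kernel:
  fixes g :: "('x, 'a) sample \<Rightarrow> 'z::euclidean_space"
  assumes x: "x \<in> space Mx" and g[measurable]: "g \<in> borel_measurable (sample_space Mx)"
    and fin: "(\<integral>\<^sup>+y. norm (g y) \<partial>sample_kernel Mx pi0 R (x, t)) < \<infinity>"
  shows "(\<integral>y. g y \<partial>sample_kernel Mx pi0 R (x, t))
           = (\<Sum>a\<in>UNIV. pi0 x t a *\<^sub>R (\<integral>r. g (x, t, a, r) \<partial>R x t a))"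
proof -
  note kernel = measurable_reward_kernel[OF x]
  have "(\<integral>\<^sup>+a. \<integral>\<^sup>+y. norm (g y) \<partial>distr (R x t a) (sample_space Mx) (\<lambda>r. (x, t, a, r))
          \<partial>action_meas (pi0 x t)) < \<infinity>"
    using fin by (simp add: sample_kernel_eq_distr[OF x] nn_integral_bind[OF _ kernel])
  from integral_bind_kernel[OF kernel g this] show ?thesis
    by (simp add: sample_kernel_eq_distr[OF x] integral_action_meas pi0_nonneg
        integral_distr[OF measurable_embed_reward[OF x] g])
qed

lemma measurable_pi0[measurable (raw)]:
  assumes "f \<in> N \<rightarrow>\<^sub>M Mx" and "g \<in> N \<rightarrow>\<^sub>M borel" and "h \<in> N \<rightarrow>\<^sub>M count_space UNIV"
  shows "(\<lambda>y. pi0 (f y) (g y) (h y)) \<in> borel_measurable N"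
proof (rule measurable_compose_countable'[OF _ assms(3)])
  show "(\<lambda>y. pi0 (f y) (g y) a) \<in> borel_measurable N" for a
    using measurable_compose[OF measurable_Pair[OF assms(1,2)] pi0_meas[of a]] by simp
qed simp

lemma measurable_qfun[measurable (raw)]:
  assumes "f \<in> N \<rightarrow>\<^sub>M Mx" and "g \<in> N \<rightarrow>\<^sub>M borel" and "h \<in> N \<rightarrow>\<^sub>M count_space UNIV"
  shows "(\<lambda>y. qfun R (f y) (g y) (h y)) \<in> borel_measurable N"
proof -
  have "(\<lambda>y. (f y, g y, h y)) \<in> N \<rightarrow>\<^sub>M Mx \<Otimes>\<^sub>M (borel \<Otimes>\<^sub>M count_space UNIV)"
    using assms by measurable
  from measurable_prob_algebraD[OF measurable_compose[OF this R_meas]]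
  have "(\<lambda>y. R (f y) (g y) (h y)) \<in> N \<rightarrow>\<^sub>M subprob_algebra borel"
    by (simp add: comp_def)
  from measurable_compose[OF this integral_measurable_subprob_algebra[of "\<lambda>r. r" borel]]
  show ?thesis by (simp add: qfun_def)
qed

lemma prob_space_sample_measure:
  assumes "prob_space Pxt" and "sets Pxt = sets (Mx \<Otimes>\<^sub>M borel)"
  shows "prob_space (sample_measure Mx Pxt pi0 R)"
  unfolding sample_measure_eq_bind
  by (rule prob_space_bind'[OF _ measurable_sample_kernel]) (simp add: space_prob_algebra assms)

end

section \<open>The OPFV gradient estimator\<close>

definition policy_score_mean ::
  "('x \<Rightarrow> real \<Rightarrow> 'a::finite \<Rightarrow> real) \<Rightarrow> ('x \<Rightarrow> real \<Rightarrow> 'a \<Rightarrow> 'z::real_vector)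
   \<Rightarrow> real \<Rightarrow> 'x \<Rightarrow> ('a \<Rightarrow> real) \<Rightarrow> 'z" where
  "policy_score_mean pz s t' x c = (\<Sum>a\<in>UNIV. (pz x t' a * c a) *\<^sub>R s x t' a)"

lemma policy_score_mean_add:
  "policy_score_mean pz s t' x (\<lambda>a. c a + d a)
     = policy_score_mean pz s t' x c + policy_score_mean pz s t' x d"
  by (simp add: policy_score_mean_def distrib_left scaleR_add_left sum.distrib)

lemma policy_score_mean_diff:
  "policy_score_mean pz s t' x (\<lambda>a. c a - d a)
     = policy_score_mean pz s t' x c - policy_score_mean pz s t' x d"
  by (simp add: policy_score_mean_def right_diff_distrib scaleR_diff_left sum_subtractf)

lemma policy_score_mean_scale:
  "policy_score_mean pz s t' x (\<lambda>a. k * c a) = k *\<^sub>R policy_score_mean pz s t' x c"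
  by (simp add: policy_score_mean_def scaleR_sum_right mult.left_commute)

lemma norm_scaleR_le_affine_bound:
  fixes v :: "'z::real_normed_vector"
  assumes "\<bar>c\<bar> \<le> k * (m + \<bar>f\<bar>)"
  shows "norm (c *\<^sub>R v) \<le> k * (m * norm v + norm (f *\<^sub>R v))"
proof -
  have "norm (c *\<^sub>R v) = \<bar>c\<bar> * norm v" by simp
  also have "\<dots> \<le> k * (m + \<bar>f\<bar>) * norm v"
    using assms by (rule mult_right_mono) simp
  also have "\<dots> = k * (m * norm v + norm (f *\<^sub>R v))"
    by (simp add: algebra_simps)
  finally show ?thesis .
qed

lemma norm_policy_score_mean_le:
  fixes s :: "'x \<Rightarrow> real \<Rightarrow> 'a::finite \<Rightarrow> 'z::real_normed_vector"
  assumes "\<And>a. \<bar>pz x t' a * c a\<bar> \<le> k * (m + \<bar>f a\<bar>)"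
  shows "norm (policy_score_mean pz s t' x c)
           \<le> k * (\<Sum>a\<in>UNIV. m * norm (s x t' a) + norm (f a *\<^sub>R s x t' a))"
  unfolding policy_score_mean_def sum_distrib_left
  by (rule order_trans[OF norm_sum sum_mono], rule norm_scaleR_le_affine_bound, rule assms)

definition opfv_summand ::
  "real \<Rightarrow> (real \<Rightarrow> 'l) \<Rightarrow> real \<Rightarrow> ('x \<Rightarrow> real \<Rightarrow> 'a::finite \<Rightarrow> real) \<Rightarrow> ('x \<Rightarrow> real \<Rightarrow> 'a \<Rightarrow> real)
   \<Rightarrow> ('x \<Rightarrow> real \<Rightarrow> 'a \<Rightarrow> real) \<Rightarrow> ('x \<Rightarrow> real \<Rightarrow> 'a \<Rightarrow> 'z::real_normed_vector)
   \<Rightarrow> ('x, 'a) sample \<Rightarrow> 'z" where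
  "opfv_summand p phi t' pz pi0 fhat s = (\<lambda>(x, t, a, r).
     (Iphi phi t t' / p * (pz x t' a / pi0 x t a) * (r - fhat x t a)) *\<^sub>R s x t' a
     + policy_score_mean pz s t' x (\<lambda>b. fhat x t' b))"

lemma opfv_grad_eq_average:
  "opfv_grad n pt T phi t' pz pi0 fhat s D
     = (1 / real n) *\<^sub>R (\<Sum>i<n. opfv_summand (pphi pt T phi t') phi t' pz pi0 fhat s (D i))"
  by (simp add: opfv_grad_def opfv_summand_def policy_score_mean_def)

section \<open>Bias under a stationary context distribution\<close>

locale opfv_setting = logging_policy Mx pi0 R
  for Mx :: "'x measure" and pi0 :: "'x \<Rightarrow> real \<Rightarrow> 'a::finite \<Rightarrow> real" and R +
  fixes pt :: "real \<Rightarrow> real"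
    and T t' rmax :: real
    and pz :: "'x \<Rightarrow> real \<Rightarrow> 'a \<Rightarrow> real"
    and s :: "'x \<Rightarrow> real \<Rightarrow> 'a \<Rightarrow> 'z::euclidean_space"
    and phi :: "real \<Rightarrow> 'l"
    and fhat :: "'x \<Rightarrow> real \<Rightarrow> 'a \<Rightarrow> real"
  assumes Mx_prob: "prob_space Mx"
    and pt_meas: "pt \<in> borel_measurable lborel"
    and pt_nonneg: "\<And>t. 0 \<le> pt t"
    and pt_supp: "\<And>t. t \<notin> {0..T} \<Longrightarrow> pt t = 0"
    and pt_prob: "(\<integral>\<^sup>+ t. ennreal (pt t) \<partial>lborel) = 1"
    and t'_nonneg: "0 \<le> t'"
    and rmax_nonneg: "0 \<le> rmax"
    and R_range: "\<And>x t a. 0 \<le> t \<Longrightarrow> AE r in R x t a. 0 \<le> r \<and> r \<le> rmax"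
    and full_support: "\<And>x t a. x \<in> space Mx \<Longrightarrow> t \<in> {0..T} \<Longrightarrow> 0 < pi0 x t a"
    and pz_nonneg: "\<And>x t a. 0 \<le> pz x t a"
    and pz_sum: "\<And>x t. (\<Sum>a\<in>UNIV. pz x t a) = 1"
    and pz_meas: "\<And>a. (\<lambda>x. pz x t' a) \<in> borel_measurable Mx"
    and s_int: "\<And>a. integrable Mx (\<lambda>x. s x t' a)"
    and phi_meas: "phi \<in> measurable borel (count_space UNIV)"
    and fhat_meas: "\<And>a. (\<lambda>(x, t). fhat x t a) \<in> borel_measurable (Mx \<Otimes>\<^sub>M borel)"
    and fhat_s_int: "\<And>a. integrable (Mx \<Otimes>\<^sub>M density lborel pt) (\<lambda>(x, t). fhat x t a *\<^sub>R s x t' a)"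
    and fhat_s_int': "\<And>a. integrable Mx (\<lambda>x. fhat x t' a *\<^sub>R s x t' a)"
    and pphi_pos: "0 < pphi pt T phi t'"
begin

abbreviation "Pt \<equiv> density lborel pt"
abbreviation "p_phi \<equiv> pphi pt T phi t'"
abbreviation "summand \<equiv> opfv_summand p_phi phi t' pz pi0 fhat s"
abbreviation "direct_term x \<equiv> policy_score_mean pz s t' x (\<lambda>a. fhat x t' a)"
abbreviation "residual_term t x \<equiv>
  policy_score_mean pz s t' x (\<lambda>a. Iphi phi t t' / p_phi * (qfun R x t a - fhat x t a))"
abbreviation "target_gap x \<equiv> policy_score_mean pz s t' x (\<lambda>a. qfun R x t' a - fhat x t' a)"
abbreviation "score_bound t x \<equiv>
  (\<Sum>a\<in>UNIV. rmax * norm (s x t' a) + norm (fhat x t a *\<^sub>R s x t' a))"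

lemma measurable_fhat[measurable (raw)]:
  assumes "f \<in> N \<rightarrow>\<^sub>M Mx" and "g \<in> N \<rightarrow>\<^sub>M borel" and "h \<in> N \<rightarrow>\<^sub>M count_space UNIV"
  shows "(\<lambda>y. fhat (f y) (g y) (h y)) \<in> borel_measurable N"
proof (rule measurable_compose_countable'[OF _ assms(3)])
  show "(\<lambda>y. fhat (f y) (g y) a) \<in> borel_measurable N" for a
    using measurable_compose[OF measurable_Pair[OF assms(1,2)] fhat_meas[of a]] by simp
qed simp

lemma measurable_pz[measurable (raw)]:
  assumes "f \<in> N \<rightarrow>\<^sub>M Mx" and "h \<in> N \<rightarrow>\<^sub>M count_space UNIV"
  shows "(\<lambda>y. pz (f y) t' (h y)) \<in> borel_measurable N"
  by (rule measurable_compose_countable'[OF _ assms(2)])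
     (use measurable_compose[OF assms(1) pz_meas] in \<open>simp_all add: comp_def\<close>)

lemma measurable_s[measurable (raw)]:
  assumes "f \<in> N \<rightarrow>\<^sub>M Mx" and "h \<in> N \<rightarrow>\<^sub>M count_space UNIV"
  shows "(\<lambda>y. s (f y) t' (h y)) \<in> borel_measurable N"
  by (rule measurable_compose_countable'[OF _ assms(2)])
     (use measurable_compose[OF assms(1) borel_measurable_integrable[OF s_int]]
       in \<open>simp_all add: comp_def\<close>)

lemma measurable_Iphi[measurable (raw)]:
  "g \<in> N \<rightarrow>\<^sub>M borel \<Longrightarrow> (\<lambda>y. Iphi phi (g y) t') \<in> borel_measurable N"
  unfolding Iphi_def using phi_meas by measurable

lemma prob_space_Pt: "prob_space Pt"
proof
  show "emeasure Pt (space Pt) = 1"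
    using pt_meas pt_prob by (simp add: emeasure_density)
qed

lemma pair_prob_space_Mx_Pt: "pair_prob_space Mx Pt"
  using Mx_prob prob_space_Pt
  by (simp add: pair_prob_space_def pair_sigma_finite_def prob_space_imp_sigma_finite)

lemma sets_Mx_Pt: "sets (Mx \<Otimes>\<^sub>M Pt) = sets (Mx \<Otimes>\<^sub>M borel)"
  by (rule sets_pair_measure_cong) simp_all

lemma time_support: "pt t \<noteq> 0 \<Longrightarrow> t \<in> {0..T}"
  using pt_supp by blast

lemma AE_time_support: "AE xt in Mx \<Otimes>\<^sub>M Pt. snd xt \<in> {0..T}"
proof -
  interpret pair_prob_space Mx Pt by (rule pair_prob_space_Mx_Pt)
  have "(\<lambda>t. ennreal (pt t)) \<in> borel_measurable lborel"
    using pt_meas by measurable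
  moreover have "AE t in lborel. 0 < ennreal (pt t) \<longrightarrow> t \<in> {0..T}"
    by (intro AE_I2 impI time_support) simp
  ultimately have AE_Pt: "AE t in Pt. t \<in> {0..T}"
    by (rule AE_density[THEN iffD2])
  have "Measurable.pred (Mx \<Otimes>\<^sub>M borel) (\<lambda>xt. snd xt \<in> {0..T})"
    by measurable
  then have "{xt \<in> space (Mx \<Otimes>\<^sub>M Pt). snd xt \<in> {0..T}} \<in> sets (Mx \<Otimes>\<^sub>M Pt)"
    by (simp add: pred_def sets_Mx_Pt sets_eq_imp_space_eq[OF sets_Mx_Pt])
  then show ?thesis
    by (rule AE_pair_measure) (use AE_Pt in simp)
qed

lemma
  shows integrable_time_weight: "integrable Pt (\<lambda>t. Iphi phi t t' / p_phi)"
    and integral_time_weight: "(\<integral>t. Iphi phi t t' / p_phi \<partial>Pt) = 1"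
proof -
  interpret prob_space Pt by (rule prob_space_Pt)
  show "integrable Pt (\<lambda>t. Iphi phi t t' / p_phi)"
  proof (rule integrable_const_bound[where B="1 / p_phi"])
    show "AE t in Pt. norm (Iphi phi t t' / p_phi) \<le> 1 / p_phi"
      using pphi_pos by (auto simp: Iphi_def)
    show "(\<lambda>t. Iphi phi t t' / p_phi) \<in> borel_measurable Pt"
      using measurable_cong_sets[OF sets_density[of lborel pt] refl] by simp
  qed
  have "(\<integral>t. Iphi phi t t' \<partial>Pt) = (\<integral>t. pt t * Iphi phi t t' \<partial>lborel)"
    using pt_meas pt_nonneg by (simp add: integral_density)
  also have "\<dots> = p_phi"
    unfolding pphi_def set_lebesgue_integral_def
    by (rule Bochner_Integration.integral_cong) (auto simp: indicator_def dest: time_support)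
  finally show "(\<integral>t. Iphi phi t t' / p_phi \<partial>Pt) = 1"
    using pphi_pos by simp
qed

lemma measurable_opfv_summand: "summand \<in> borel_measurable (sample_space Mx)"
  unfolding opfv_summand_def policy_score_mean_def sample_space_def case_prod_beta'
  by measurable

lemma pz_le_1: "pz x t a \<le> 1"
  using member_le_sum[of a UNIV "pz x t"] pz_nonneg pz_sum by simp

lemma
  assumes "x \<in> space Mx" and "0 \<le> t"
  shows integrable_reward: "integrable (R x t a) (\<lambda>r. r)"
    and qfun_nonneg: "0 \<le> qfun R x t a"
    and qfun_le_rmax: "qfun R x t a \<le> rmax"
proof -
  interpret prob_space "R x t a" using prob_space_R[OF assms(1)] .
  have range: "AE r in R x t a. 0 \<le> r \<and> r \<le> rmax" using R_range[OF assms(2)] .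
  show int: "integrable (R x t a) (\<lambda>r. r)"
  proof (rule integrable_const_bound[where B=rmax])
    show "AE r in R x t a. norm r \<le> rmax"
      using range by eventually_elim simp
    show "(\<lambda>r. r) \<in> borel_measurable (R x t a)"
      by (simp add: measurable_cong_sets[OF sets_R[OF assms(1)] refl])
  qed
  show "0 \<le> qfun R x t a"
    unfolding qfun_def using range by (intro integral_nonneg_AE) (auto elim: eventually_mono)
  show "qfun R x t a \<le> rmax"
    unfolding qfun_def using range by (intro integral_le_const[OF int]) (auto elim: eventually_mono)
qed

lemma integral_summand_reward:
  assumes x: "x \<in> space Mx" and t: "0 \<le> t"
  shows "(\<integral>r. summand (x, t, a, r) \<partial>R x t a)
    = (Iphi phi t t' / p_phi * (pz x t' a / pi0 x t a) * (qfun R x t a - fhat x t a)) *\<^sub>R s x t' a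
      + direct_term x"
proof -
  interpret prob_space "R x t a" using prob_space_R[OF x] .
  define c where "c = Iphi phi t t' / p_phi * (pz x t' a / pi0 x t a)"
  have int: "integrable (R x t a) (\<lambda>r. c * (r - fhat x t a))"
    using integrable_reward[OF x t] by simp
  have "(\<integral>r. summand (x, t, a, r) \<partial>R x t a)
      = (\<integral>r. (c * (r - fhat x t a)) *\<^sub>R s x t' a + direct_term x \<partial>R x t a)"
    by (simp add: opfv_summand_def c_def)
  also have "\<dots> = (\<integral>r. c * (r - fhat x t a) \<partial>R x t a) *\<^sub>R s x t' a + direct_term x"
    using int by (simp add: prob_space)
  also have "(\<integral>r. c * (r - fhat x t a) \<partial>R x t a) = c * (qfun R x t a - fhat x t a)"
    using integrable_reward[OF x t] by (simp add: qfun_def prob_space)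
  finally show ?thesis by (simp add: c_def)
qed

lemma integral_summand_sample_kernel:
  assumes x: "x \<in> space Mx" and t: "t \<in> {0..T}"
    and fin: "(\<integral>\<^sup>+y. norm (summand y) \<partial>sample_kernel Mx pi0 R (x, t)) < \<infinity>"
  shows "(\<integral>y. summand y \<partial>sample_kernel Mx pi0 R (x, t))
    = policy_score_mean pz s t' x (\<lambda>a. Iphi phi t t' / p_phi * (qfun R x t a - fhat x t a))
      + direct_term x"
proof -
  have "pi0 x t a *\<^sub>R (\<integral>r. summand (x, t, a, r) \<partial>R x t a)
      = (pz x t' a * (Iphi phi t t' / p_phi * (qfun R x t a - fhat x t a))) *\<^sub>R s x t' a
        + pi0 x t a *\<^sub>R direct_term x" for a
  proof -
    \<comment> \<open>Full support lets pi0 cancel against the importance weight.\<close>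
    have "pi0 x t a * (Iphi phi t t' / p_phi * (pz x t' a / pi0 x t a) * d)
        = pz x t' a * (Iphi phi t t' / p_phi * d)" for d
      using full_support[OF x t, of a] by (simp add: field_simps)
    then show ?thesis
      using t by (simp add: integral_summand_reward[OF x] scaleR_add_right)
  qed
  then show ?thesis
    using measurable_opfv_summand fin
    by (simp add: integral_sample_kernel[OF x] sum.distrib policy_score_mean_def
        scaleR_sum_left[symmetric] pi0_sum)
qed

lemma norm_summand_le:
  assumes x: "x \<in> space Mx" and t: "t \<in> {0..T}" and r: "0 \<le> r" "r \<le> rmax"
  shows "pi0 x t a * norm (summand (x, t, a, r))
    \<le> (rmax * norm (s x t' a) + norm (fhat x t a *\<^sub>R s x t' a)) / p_phi
      + pi0 x t a * norm (direct_term x)"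
proof -
  have pi0_pos: "0 < pi0 x t a" using full_support[OF x t] .
  define w where "w = Iphi phi t t' / p_phi * (pz x t' a / pi0 x t a)"
  have "0 \<le> w"
    using pphi_pos pi0_pos pz_nonneg by (simp add: w_def Iphi_def)
  moreover have "\<bar>r - fhat x t a\<bar> \<le> rmax + \<bar>fhat x t a\<bar>"
    using r by linarith
  ultimately have "\<bar>w * (r - fhat x t a)\<bar> \<le> w * (rmax + \<bar>fhat x t a\<bar>)"
    by (simp add: abs_mult mult_left_mono)
  then have "norm ((w * (r - fhat x t a)) *\<^sub>R s x t' a)
      \<le> w * (rmax * norm (s x t' a) + norm (fhat x t a *\<^sub>R s x t' a))"
    by (rule norm_scaleR_le_affine_bound)
  moreover have "summand (x, t, a, r) = (w * (r - fhat x t a)) *\<^sub>R s x t' a + direct_term x"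
    by (simp add: opfv_summand_def w_def)
  ultimately have "norm (summand (x, t, a, r))
      \<le> w * (rmax * norm (s x t' a) + norm (fhat x t a *\<^sub>R s x t' a)) + norm (direct_term x)"
    by (auto intro: order_trans[OF norm_triangle_ineq])
  then have "pi0 x t a * norm (summand (x, t, a, r))
      \<le> pi0 x t a * (w * (rmax * norm (s x t' a) + norm (fhat x t a *\<^sub>R s x t' a))
          + norm (direct_term x))"
    using pi0_pos by (intro mult_left_mono) auto
  also have "\<dots> = Iphi phi t t' * pz x t' a
        * (rmax * norm (s x t' a) + norm (fhat x t a *\<^sub>R s x t' a)) / p_phi
      + pi0 x t a * norm (direct_term x)"
    using pi0_pos pphi_pos by (simp add: w_def field_simps)
  also have "\<dots> \<le> (rmax * norm (s x t' a) + norm (fhat x t a *\<^sub>R s x t' a)) / p_phi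
      + pi0 x t a * norm (direct_term x)"
    using pphi_pos rmax_nonneg pz_le_1[of x t' a] pz_nonneg[of x t' a]
    by (intro add_right_mono divide_right_mono mult_left_le_one_le mult_le_one)
       (auto simp: Iphi_def)
  finally show ?thesis .
qed

lemma nn_integral_norm_summand_reward_le:
  assumes x: "x \<in> space Mx" and t: "t \<in> {0..T}"
  shows "ennreal (pi0 x t a) * (\<integral>\<^sup>+r. norm (summand (x, t, a, r)) \<partial>R x t a)
    \<le> ennreal ((rmax * norm (s x t' a) + norm (fhat x t a *\<^sub>R s x t' a)) / p_phi
        + pi0 x t a * norm (direct_term x))"
    (is "_ \<le> ennreal ?b")
proof -
  interpret prob_space "R x t a" using prob_space_R[OF x] .
  have "(\<lambda>r. summand (x, t, a, r)) \<in> borel_measurable (R x t a)"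
    using measurable_compose[OF measurable_embed_reward[OF x] measurable_opfv_summand]
    by (simp add: comp_def)
  then have meas: "(\<lambda>r. ennreal (norm (summand (x, t, a, r)))) \<in> borel_measurable (R x t a)"
    by measurable
  have "AE r in R x t a. 0 \<le> r \<and> r \<le> rmax"
    using R_range t by simp
  then have "AE r in R x t a. ennreal (pi0 x t a * norm (summand (x, t, a, r))) \<le> ennreal ?b"
    by eventually_elim (intro ennreal_leI norm_summand_le[OF x t], auto)
  then have "(\<integral>\<^sup>+r. ennreal (pi0 x t a * norm (summand (x, t, a, r))) \<partial>R x t a)
      \<le> (\<integral>\<^sup>+r. ennreal ?b \<partial>R x t a)"
    by (rule nn_integral_mono_AE)
  then show ?thesis
    using pi0_nonneg meas by (simp add: ennreal_mult nn_integral_cmult emeasure_space_1)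
qed

lemma nn_integral_norm_summand_le:
  assumes x: "x \<in> space Mx" and t: "t \<in> {0..T}"
  shows "(\<integral>\<^sup>+y. norm (summand y) \<partial>sample_kernel Mx pi0 R (x, t))
    \<le> ennreal (score_bound t x / p_phi + norm (direct_term x))"
proof -
  have "(\<integral>\<^sup>+y. norm (summand y) \<partial>sample_kernel Mx pi0 R (x, t))
      = (\<Sum>a\<in>UNIV. ennreal (pi0 x t a) * (\<integral>\<^sup>+r. norm (summand (x, t, a, r)) \<partial>R x t a))"
    using measurable_opfv_summand by (simp add: nn_integral_sample_kernel[OF x])
  also have "\<dots> \<le> (\<Sum>a\<in>UNIV. ennreal ((rmax * norm (s x t' a) + norm (fhat x t a *\<^sub>R s x t' a))
      / p_phi + pi0 x t a * norm (direct_term x)))"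
    by (rule sum_mono) (rule nn_integral_norm_summand_reward_le[OF x t])
  also have "\<dots> = ennreal (score_bound t x / p_phi + norm (direct_term x))"
    using pphi_pos pi0_nonneg rmax_nonneg
    by (subst sum_ennreal) (auto simp: sum.distrib sum_divide_distrib[symmetric]
        sum_distrib_right[symmetric] pi0_sum)
  finally show ?thesis .
qed

lemma integrable_score_bound_target: "integrable Mx (score_bound t')"
  by (intro Bochner_Integration.integrable_sum Bochner_Integration.integrable_add
      integrable_mult_right integrable_norm s_int fhat_s_int')

lemma integrable_score_bound: "integrable (Mx \<Otimes>\<^sub>M Pt) (\<lambda>xt. score_bound (snd xt) (fst xt))"
proof (intro Bochner_Integration.integrable_sum Bochner_Integration.integrable_add)
  interpret pair_prob_space Mx Pt by (rule pair_prob_space_Mx_Pt)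
  fix a
  have "integrable (Mx \<Otimes>\<^sub>M Pt) (\<lambda>(x, t). 1 *\<^sub>R norm (s x t' a))"
    using s_int by (intro integral_scaleR_product) auto
  then show "integrable (Mx \<Otimes>\<^sub>M Pt) (\<lambda>xt. rmax * norm (s (fst xt) t' a))"
    by (simp add: case_prod_beta')
  show "integrable (Mx \<Otimes>\<^sub>M Pt) (\<lambda>xt. norm (fhat (fst xt) (snd xt) a *\<^sub>R s (fst xt) t' a))"
    using integrable_norm[OF fhat_s_int[of a]] by (simp add: case_prod_beta')
qed

lemma integrable_direct_term: "integrable Mx direct_term"
proof (rule Bochner_Integration.integrable_bound[OF integrable_score_bound_target])
  show "direct_term \<in> borel_measurable Mx"
    unfolding policy_score_mean_def by measurable
  have "\<bar>pz x t' a * fhat x t' a\<bar> \<le> 1 * (rmax + \<bar>fhat x t' a\<bar>)" for x a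
    using pz_nonneg[of x t' a] pz_le_1[of x t' a] rmax_nonneg
      mult_left_le_one_le[of "\<bar>fhat x t' a\<bar>" "pz x t' a"]
    by (simp add: abs_mult)
  then have "norm (direct_term x) \<le> 1 * score_bound t' x" for x
    by (rule norm_policy_score_mean_le)
  then show "AE x in Mx. norm (direct_term x) \<le> norm (score_bound t' x)"
    by (intro AE_I2) (simp add: order_trans[OF _ abs_ge_self])
qed

lemma AE_support: "AE xt in Mx \<Otimes>\<^sub>M Pt. fst xt \<in> space Mx \<and> snd xt \<in> {0..T}"
  using AE_time_support AE_space[of "Mx \<Otimes>\<^sub>M Pt"]
  by eventually_elim (auto simp: space_pair_measure)

lemma measurable_sample_kernel_Mx_Pt:
  "sample_kernel Mx pi0 R \<in> Mx \<Otimes>\<^sub>M Pt \<rightarrow>\<^sub>M subprob_algebra (sample_space Mx)"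
  using measurable_prob_algebraD[OF measurable_sample_kernel]
  by (simp add: measurable_cong_sets[OF sets_Mx_Pt refl])

lemma AE_nn_integral_norm_summand_le:
  "AE xt in Mx \<Otimes>\<^sub>M Pt. (\<integral>\<^sup>+y. norm (summand y) \<partial>sample_kernel Mx pi0 R xt)
     \<le> ennreal (score_bound (snd xt) (fst xt) / p_phi + norm (direct_term (fst xt)))"
  using AE_support
proof eventually_elim
  case (elim xt)
  then show ?case
    using nn_integral_norm_summand_le[of "fst xt" "snd xt"] by simp
qed

lemma nn_integral_norm_summand_finite:
  "(\<integral>\<^sup>+xt. \<integral>\<^sup>+y. norm (summand y) \<partial>sample_kernel Mx pi0 R xt \<partial>(Mx \<Otimes>\<^sub>M Pt)) < \<infinity>"
proof -
  interpret pair_prob_space Mx Pt by (rule pair_prob_space_Mx_Pt)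
  let ?G = "\<lambda>xt. score_bound (snd xt) (fst xt) / p_phi + norm (direct_term (fst xt))"
  have "integrable (Mx \<Otimes>\<^sub>M Pt) (\<lambda>(x, t). 1 *\<^sub>R norm (direct_term x))"
    using integrable_direct_term by (intro integral_scaleR_product) auto
  then have G_int: "integrable (Mx \<Otimes>\<^sub>M Pt) ?G"
    using integrable_score_bound by (simp add: case_prod_beta')
  have G_nonneg: "0 \<le> ?G xt" for xt
    using rmax_nonneg pphi_pos by (intro add_nonneg_nonneg divide_nonneg_pos sum_nonneg) auto
  have "(\<integral>\<^sup>+xt. \<integral>\<^sup>+y. norm (summand y) \<partial>sample_kernel Mx pi0 R xt \<partial>(Mx \<Otimes>\<^sub>M Pt))
      \<le> (\<integral>\<^sup>+xt. ennreal (?G xt) \<partial>(Mx \<Otimes>\<^sub>M Pt))"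
    using AE_nn_integral_norm_summand_le by (rule nn_integral_mono_AE)
  also have "\<dots> = ennreal (\<integral>xt. ?G xt \<partial>(Mx \<Otimes>\<^sub>M Pt))"
    using G_int G_nonneg by (simp add: nn_integral_eq_integral)
  finally show ?thesis
    by (rule le_less_trans) simp
qed

lemma
  shows integrable_sample_summand: "integrable (sample_measure Mx (Mx \<Otimes>\<^sub>M Pt) pi0 R) summand"
    and integral_sample_summand: "(\<integral>y. summand y \<partial>sample_measure Mx (Mx \<Otimes>\<^sub>M Pt) pi0 R)
      = (\<integral>xt. residual_term (snd xt) (fst xt) + direct_term (fst xt) \<partial>(Mx \<Otimes>\<^sub>M Pt))"
proof -
  note K = measurable_sample_kernel_Mx_Pt and fin = nn_integral_norm_summand_finite
  show "integrable (sample_measure Mx (Mx \<Otimes>\<^sub>M Pt) pi0 R) summand"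
    unfolding sample_measure_eq_bind by (rule integrable_bind_kernel[OF K measurable_opfv_summand fin])
  have "(\<integral>y. summand y \<partial>sample_measure Mx (Mx \<Otimes>\<^sub>M Pt) pi0 R)
      = (\<integral>xt. (\<integral>y. summand y \<partial>sample_kernel Mx pi0 R xt) \<partial>(Mx \<Otimes>\<^sub>M Pt))"
    unfolding sample_measure_eq_bind by (rule integral_bind_kernel[OF K measurable_opfv_summand fin])
  also have "\<dots> = (\<integral>xt. residual_term (snd xt) (fst xt) + direct_term (fst xt) \<partial>(Mx \<Otimes>\<^sub>M Pt))"
  proof (rule integral_cong_AE)
    show "(\<lambda>xt. \<integral>y. summand y \<partial>sample_kernel Mx pi0 R xt) \<in> borel_measurable (Mx \<Otimes>\<^sub>M Pt)"
      using measurable_compose[OF K integral_measurable_subprob_algebra[OF measurable_opfv_summand]]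
      by (simp add: comp_def)
    show "(\<lambda>xt. residual_term (snd xt) (fst xt) + direct_term (fst xt)) \<in> borel_measurable (Mx \<Otimes>\<^sub>M Pt)"
      unfolding measurable_cong_sets[OF sets_Mx_Pt refl] policy_score_mean_def by measurable
    show "AE xt in Mx \<Otimes>\<^sub>M Pt. (\<integral>y. summand y \<partial>sample_kernel Mx pi0 R xt)
        = residual_term (snd xt) (fst xt) + direct_term (fst xt)"
      using AE_support AE_nn_integral_norm_summand_le
    proof eventually_elim
      case (elim xt)
      from elim(2) have "(\<integral>\<^sup>+y. norm (summand y) \<partial>sample_kernel Mx pi0 R xt) < \<infinity>"
        by (rule le_less_trans) simp
      with elim(1) show ?case
        using integral_summand_sample_kernel[of "fst xt" "snd xt"] by simp
    qed
  qed
  finally show "(\<integral>y. summand y \<partial>sample_measure Mx (Mx \<Otimes>\<^sub>M Pt) pi0 R)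
      = (\<integral>xt. residual_term (snd xt) (fst xt) + direct_term (fst xt) \<partial>(Mx \<Otimes>\<^sub>M Pt))" .
qed

lemma integrable_residual_term:
  "integrable (Mx \<Otimes>\<^sub>M Pt) (\<lambda>xt. residual_term (snd xt) (fst xt))"
proof (rule Bochner_Integration.integrable_bound)
  show "integrable (Mx \<Otimes>\<^sub>M Pt) (\<lambda>xt. 1 / p_phi * score_bound (snd xt) (fst xt))"
    using integrable_score_bound by simp
  show "(\<lambda>xt. residual_term (snd xt) (fst xt)) \<in> borel_measurable (Mx \<Otimes>\<^sub>M Pt)"
    unfolding measurable_cong_sets[OF sets_Mx_Pt refl] policy_score_mean_def by measurable
  have pointwise: "norm (residual_term t x) \<le> 1 / p_phi * score_bound t x" if "x \<in> space Mx" "t \<in> {0..T}" for x t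
  proof (rule norm_policy_score_mean_le)
    fix a
    define c where "c = pz x t' a * (Iphi phi t t' / p_phi)"
    have c: "0 \<le> c" "c \<le> 1 / p_phi"
      using pz_nonneg[of x t' a] pz_le_1[of x t' a] pphi_pos
      by (auto simp: c_def Iphi_def intro!: divide_right_mono)
    have "\<bar>qfun R x t a - fhat x t a\<bar> \<le> rmax + \<bar>fhat x t a\<bar>"
      using qfun_nonneg[of x t a] qfun_le_rmax[of x t a] that by auto
    then have "c * \<bar>qfun R x t a - fhat x t a\<bar> \<le> 1 / p_phi * (rmax + \<bar>fhat x t a\<bar>)"
      using c pphi_pos by (intro mult_mono) auto
    then show "\<bar>pz x t' a * (Iphi phi t t' / p_phi * (qfun R x t a - fhat x t a))\<bar>
        \<le> 1 / p_phi * (rmax + \<bar>fhat x t a\<bar>)"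
      unfolding mult.assoc[symmetric] c_def[symmetric] using c by (simp add: abs_mult)
  qed
  show "AE xt in Mx \<Otimes>\<^sub>M Pt. norm (residual_term (snd xt) (fst xt))
      \<le> norm (1 / p_phi * score_bound (snd xt) (fst xt))"
    using AE_support
  proof eventually_elim
    case (elim xt)
    then have "norm (residual_term (snd xt) (fst xt)) \<le> 1 / p_phi * score_bound (snd xt) (fst xt)"
      by (intro pointwise) auto
    then show ?case
      using abs_ge_self[of "1 / p_phi * score_bound (snd xt) (fst xt)"]
      by (simp only: real_norm_def)
  qed
qed

lemma integrable_target_gap: "integrable Mx target_gap"
proof (rule Bochner_Integration.integrable_bound[OF integrable_score_bound_target])
  show "target_gap \<in> borel_measurable Mx"
    unfolding policy_score_mean_def by measurable
  have "norm (target_gap x) \<le> 1 * score_bound t' x" if x: "x \<in> space Mx" for x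
  proof (rule norm_policy_score_mean_le)
    fix a
    have "\<bar>qfun R x t' a - fhat x t' a\<bar> \<le> rmax + \<bar>fhat x t' a\<bar>"
      using qfun_nonneg[OF x t'_nonneg, of a] qfun_le_rmax[OF x t'_nonneg, of a] by auto
    moreover have "pz x t' a * \<bar>qfun R x t' a - fhat x t' a\<bar> \<le> \<bar>qfun R x t' a - fhat x t' a\<bar>"
      using pz_nonneg[of x t' a] pz_le_1[of x t' a] by (intro mult_left_le_one_le) auto
    ultimately show "\<bar>pz x t' a * (qfun R x t' a - fhat x t' a)\<bar> \<le> 1 * (rmax + \<bar>fhat x t' a\<bar>)"
      using pz_nonneg[of x t' a] by (simp add: abs_mult)
  qed
  then show "AE x in Mx. norm (target_gap x) \<le> norm (score_bound t' x)"
    by (intro AE_I2) (simp add: order_trans[OF _ abs_ge_self])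
qed

lemma bias_integrand_eq:
  "policy_score_mean pz s t' x (\<lambda>a. Iphi phi t t' / p_phi
      * ((qfun R x t a - qfun R x t' a) - (fhat x t a - fhat x t' a)))
    = residual_term t x - (Iphi phi t t' / p_phi) *\<^sub>R target_gap x"
proof -
  have "policy_score_mean pz s t' x (\<lambda>a. Iphi phi t t' / p_phi
      * ((qfun R x t a - qfun R x t' a) - (fhat x t a - fhat x t' a)))
    = policy_score_mean pz s t' x (\<lambda>a. Iphi phi t t' / p_phi * (qfun R x t a - fhat x t a)
        - Iphi phi t t' / p_phi * (qfun R x t' a - fhat x t' a))"
    by (intro arg_cong[of _ _ "policy_score_mean pz s t' x"] ext) (simp add: right_diff_distrib)
  then show ?thesis
    by (simp only: policy_score_mean_diff policy_score_mean_scale)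
qed

lemma opfv_bias_decomposition:
  "(\<integral>xt. residual_term (snd xt) (fst xt) + direct_term (fst xt) \<partial>(Mx \<Otimes>\<^sub>M Pt))
     - (\<integral>x. policy_score_mean pz s t' x (qfun R x t') \<partial>Mx)
   = (\<integral>xt. policy_score_mean pz s t' (fst xt) (\<lambda>a. Iphi phi (snd xt) t' / p_phi
       * ((qfun R (fst xt) (snd xt) a - qfun R (fst xt) t' a)
          - (fhat (fst xt) (snd xt) a - fhat (fst xt) t' a))) \<partial>(Mx \<Otimes>\<^sub>M Pt))"
proof -
  interpret pair_prob_space Mx Pt by (rule pair_prob_space_Mx_Pt)
  let ?w = "\<lambda>t. Iphi phi t t' / p_phi"
  have direct: "integrable (Mx \<Otimes>\<^sub>M Pt) (\<lambda>xt. direct_term (fst xt))"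
    "(\<integral>xt. direct_term (fst xt) \<partial>(Mx \<Otimes>\<^sub>M Pt)) = (\<integral>x. direct_term x \<partial>Mx)"
    using integral_scaleR_product[OF integrable_direct_term M2.integrable_const[of 1]]
    by (simp_all add: case_prod_beta' M2.prob_space[simplified])
  \<comment> \<open>By stationarity the time weight ?w has mean 1 under Pt and does not depend on x,
    so the target-time gap may be integrated against it over the product measure.\<close>
  have gap: "integrable (Mx \<Otimes>\<^sub>M Pt) (\<lambda>xt. ?w (snd xt) *\<^sub>R target_gap (fst xt))"
    "(\<integral>xt. ?w (snd xt) *\<^sub>R target_gap (fst xt) \<partial>(Mx \<Otimes>\<^sub>M Pt)) = (\<integral>x. target_gap x \<partial>Mx)"
    using integral_scaleR_product[OF integrable_target_gap integrable_time_weight]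
    unfolding integral_time_weight by (simp_all add: case_prod_beta')
  have target: "policy_score_mean pz s t' x (qfun R x t') = target_gap x + direct_term x" for x
    by (simp add: policy_score_mean_add[symmetric])
  have "(\<integral>xt. residual_term (snd xt) (fst xt) + direct_term (fst xt) \<partial>(Mx \<Otimes>\<^sub>M Pt))
        - (\<integral>x. policy_score_mean pz s t' x (qfun R x t') \<partial>Mx)
      = (\<integral>xt. residual_term (snd xt) (fst xt) \<partial>(Mx \<Otimes>\<^sub>M Pt)) - (\<integral>x. target_gap x \<partial>Mx)"
    using integrable_residual_term integrable_target_gap integrable_direct_term direct
    by (simp add: target)
  also have "\<dots> = (\<integral>xt. residual_term (snd xt) (fst xt) - ?w (snd xt) *\<^sub>R target_gap (fst xt)
      \<partial>(Mx \<Otimes>\<^sub>M Pt))"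
    using integrable_residual_term gap by simp
  finally show ?thesis
    by (simp only: bias_integrand_eq)
qed

lemma opfv_grad_bias:
  assumes n: "0 < n"
  shows "(\<integral>D. opfv_grad n pt T phi t' pz pi0 fhat s D \<partial>data_measure n Mx (Mx \<Otimes>\<^sub>M Pt) pi0 R)
      - true_grad Mx t' pz R s
    = (\<integral>xt. policy_score_mean pz s t' (fst xt) (\<lambda>a. Iphi phi (snd xt) t' / p_phi
       * ((qfun R (fst xt) (snd xt) a - qfun R (fst xt) t' a)
          - (fhat (fst xt) (snd xt) a - fhat (fst xt) t' a))) \<partial>(Mx \<Otimes>\<^sub>M Pt))"
proof -
  have "prob_space (sample_measure Mx (Mx \<Otimes>\<^sub>M Pt) pi0 R)"
    using Mx_prob prob_space_Pt sets_Mx_Pt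
    by (intro prob_space_sample_measure prob_space_pair)
  then have "(\<integral>D. opfv_grad n pt T phi t' pz pi0 fhat s D \<partial>data_measure n Mx (Mx \<Otimes>\<^sub>M Pt) pi0 R)
      = (\<integral>y. summand y \<partial>sample_measure Mx (Mx \<Otimes>\<^sub>M Pt) pi0 R)"
    unfolding opfv_grad_eq_average data_measure_def
    using integrable_sample_summand n by (rule integral_PiM_average)
  moreover have "true_grad Mx t' pz R s = (\<integral>x. policy_score_mean pz s t' x (qfun R x t') \<partial>Mx)"
    by (simp add: true_grad_def policy_score_mean_def)
  ultimately show ?thesis
    using integral_sample_summand opfv_bias_decomposition by simp
qed

end

theorem theoremF2:
  fixes Mx :: "'x measure"
    and Px' :: "'x measure"
    and Pxt :: "('x \<times> real) measure"
    and pt :: "real \<Rightarrow> real"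
    and T t' rmax :: real
    and n :: nat
    and pi0 :: "'x \<Rightarrow> real \<Rightarrow> 'a::finite \<Rightarrow> real"
    and R :: "'x \<Rightarrow> real \<Rightarrow> 'a \<Rightarrow> real measure"
    and piz :: "'z::euclidean_space \<Rightarrow> 'x \<Rightarrow> real \<Rightarrow> 'a \<Rightarrow> real"
    and \<zeta> :: 'z
    and s :: "'x \<Rightarrow> real \<Rightarrow> 'a \<Rightarrow> 'z"
    and phi :: "real \<Rightarrow> 'l"
    and fhat :: "'x \<Rightarrow> real \<Rightarrow> 'a \<Rightarrow> real"
  assumes n_pos: "0 < n"
    and Mx_prob: "prob_space Mx"
    and T_nonneg: "0 \<le> T" and t'_gt: "T < t'"
    and pt_meas: "pt \<in> borel_measurable lborel"
    and pt_nonneg: "\<And>t. 0 \<le> pt t"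
    and pt_supp: "\<And>t. t \<notin> {0..T} \<Longrightarrow> pt t = 0"
    and pt_prob: "(\<integral>\<^sup>+ t. ennreal (pt t) \<partial>lborel) = 1"
    and stationary: "Pxt = Mx \<Otimes>\<^sub>M density lborel pt"
    and target_ctx: "Px' = Mx"
    and rmax_nonneg: "0 \<le> rmax"
    and R_prob: "\<And>x t a. prob_space (R x t a)"
    and R_sets: "\<And>x t a. sets (R x t a) = sets borel"
    and R_range: "\<And>x t a. 0 \<le> t \<Longrightarrow> AE r in R x t a. 0 \<le> r \<and> r \<le> rmax"
    and R_meas: "(\<lambda>(x, t, a). R x t a)
                   \<in> measurable (Mx \<Otimes>\<^sub>M (borel \<Otimes>\<^sub>M count_space UNIV)) (prob_algebra borel)"
    and pi0_nonneg: "\<And>x t a. 0 \<le> pi0 x t a"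
    and pi0_sum: "\<And>x t. (\<Sum>a\<in>UNIV. pi0 x t a) = 1"
    and pi0_meas: "\<And>a. (\<lambda>(x, t). pi0 x t a) \<in> borel_measurable (Mx \<Otimes>\<^sub>M borel)"
    and full_support: "\<And>x t a. x \<in> space Mx \<Longrightarrow> t \<in> {0..T} \<Longrightarrow> 0 < pi0 x t a"
    and piz_nonneg: "\<And>z x t a. 0 \<le> piz z x t a"
    and piz_sum: "\<And>z x t. (\<Sum>a\<in>UNIV. piz z x t a) = 1"
    and piz_meas: "\<And>a. (\<lambda>x. piz \<zeta> x t' a) \<in> borel_measurable Mx"
    and score: "\<And>x t a. 0 \<le> t \<Longrightarrow>
                  ((\<lambda>z. ln (piz z x t a)) has_derivative (\<lambda>h. s x t a \<bullet> h)) (at \<zeta>)"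
    and s_int: "\<And>a. integrable Mx (\<lambda>x. s x t' a)"
    and phi_meas: "phi \<in> measurable borel (count_space UNIV)"
    and fhat_meas: "\<And>a. (\<lambda>(x, t). fhat x t a) \<in> borel_measurable (Mx \<Otimes>\<^sub>M borel)"
    and fhat_s_int: "\<And>a. integrable Pxt (\<lambda>(x, t). fhat x t a *\<^sub>R s x t' a)"
    and fhat_s_int': "\<And>a. integrable Mx (\<lambda>x. fhat x t' a *\<^sub>R s x t' a)"
    and pphi_pos: "0 < pphi pt T phi t'"
  shows "(\<integral>D. opfv_grad n pt T phi t' (piz \<zeta>) pi0 fhat s D \<partial>data_measure n Mx Pxt pi0 R)
           - true_grad Px' t' (piz \<zeta>) R s
         = (\<integral>xt. (case xt of (x, t) \<Rightarrow>
              (\<Sum>a\<in>UNIV. (piz \<zeta> x t' a * (Iphi phi t t' / pphi pt T phi t')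
                 * ((qfun R x t a - qfun R x t' a) - (fhat x t a - fhat x t' a))) *\<^sub>R s x t' a))
            \<partial>Pxt)"
proof -
  interpret opfv_setting Mx pi0 R pt T t' rmax "piz \<zeta>" s phi fhat
  proof (intro opfv_setting.intro logging_policy.intro opfv_setting_axioms.intro)
    show "0 \<le> t'" using T_nonneg t'_gt by simp
    show "integrable (Mx \<Otimes>\<^sub>M density lborel pt) (\<lambda>(x, t). fhat x t a *\<^sub>R s x t' a)" for a
      using fhat_s_int[of a] by (simp add: stationary)
    show "pt \<in> borel_measurable lborel" by (rule pt_meas)
    show "AE r in R x t a. 0 \<le> r \<and> r \<le> rmax" if "0 \<le> t" for x t a
      using R_range that .
  qed (simp_all add: assms)
  show ?thesis
    using opfv_grad_bias[OF n_pos] unfolding stationary target_ctx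
    by (simp add: policy_score_mean_def case_prod_beta' mult.assoc)
qed

end
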